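(* Let $\alpha>0$ and $\lambda\in\mathbb C$ with $\operatorname{Re}\lambda>-1$ and $\lambda\notin\{0,1\}$. Then the hypergeometric equation $$z(1-z)\psi''+\big((\lambda-\sqrt{1+\alpha})-2\lambda z\big)\psi'-\lambda(\lambda-1)\psi=0$$ has no nontrivial solution $\psi\in C^\infty[0,1]$ (equivalently, with $y'=2z-1$, the equation $(\lambda^2-\lambda)\psi+(2\lambda y'+2\sqrt{1+\alpha})\psi'+(y'^2-1)\psi''=0$ has no nontrivial solution in $C^\infty[-1,1]$). As a consequence, the equation $$(\lambda^2+\lambda)\varphi+\Big((2\lambda+2)y+\frac{2\alpha}{\sqrt{1+\alpha}+y}\Big)\varphi'+(y^2-1)\varphi''=0$$ has no nontrivial solution $\varphi\in C^\infty[-1,1]$ when $\operatorname{Re}\lambda>-1$ and $\lambda\notin\{0,1\}$. *)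

theory Defs
  imports "HOL-Analysis.Analysis"
begin

text \<open>A function f on the closed interval [a,b] is C-infinity there if it admits a
tower of derivatives: D 0 = f on [a,b] and each D n has derivative D (n+1) at every
point of [a,b], taken within [a,b] (one-sided at the endpoints).\<close>
definition smooth_tower :: "real \<Rightarrow> real \<Rightarrow> (real \<Rightarrow> complex) \<Rightarrow> (nat \<Rightarrow> real \<Rightarrow> complex) \<Rightarrow> bool" where
  "smooth_tower a b f D \<longleftrightarrow>
     (\<forall>x\<in>{a..b}. D 0 x = f x) \<and>
     (\<forall>n. \<forall>x\<in>{a..b}. (D n has_vector_derivative D (Suc n) x) (at x within {a..b}))"

definition smooth_cc :: "real \<Rightarrow> real \<Rightarrow> (real \<Rightarrow> complex) \<Rightarrow> bool" where
  "smooth_cc a b f \<longleftrightarrow> (\<exists>D. smooth_tower a b f D)"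

end

(*
  Differentiating the Gauss equation k times shows that the k-th derivative of a smooth
  solution again solves a Gauss equation, with c and d raised by k.  Once Re c, Re d > 1 the
  operator is symmetric for the weight x^(c-1) (1-x)^(d-1) with vanishing boundary terms, so
  integrating the equation against x^p gives a two-term recurrence for the weighted moments
  whose leading coefficient is (lambda+n)(lambda+n-1).  Under the hypotheses on lambda this
  never vanishes, so all moments vanish and, by Weierstrass approximation, so do all high
  derivatives; the same coefficients let one descend through the differentiated equations
  down to the solution itself.

  The second equation is carried to the first one by the Moebius substitution
  y = (s^2-1)/(s+1-2x) - s with s = sqrt(1+alpha), which maps [0,1] onto [-1,1], together
  with psi(x) = (s+1-2x)^(-lambda) phi(y).
*)
theory Submission
  imports Defs
begin

section \<open>Vanishing moments\<close>

lemma has_integral_mult_polynomial_eq_0: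
  fixes r :: "real \<Rightarrow> real"
  assumes moments: "\<And>p::nat. ((\<lambda>x. r x * x ^ p) has_integral 0) S"
    and "real_polynomial_function g"
  shows "((\<lambda>x. r x * g x) has_integral 0) S"
proof -
  obtain c n where g: "g = (\<lambda>x. \<Sum>i\<le>n. c i * x ^ i)"
    using assms(2) unfolding real_polynomial_function_iff_sum by blast
  have "((\<lambda>x. \<Sum>i\<le>n. c i * (r x * x ^ i)) has_integral (\<Sum>i\<le>n. c i * 0)) S"
    by (intro has_integral_sum has_integral_mult_right moments) simp
  then show ?thesis
    by (simp add: g sum_distrib_left mult.left_commute)
qed

lemma vanishing_moments_imp_zero_real:
  fixes r :: "real \<Rightarrow> real"
  assumes "a < b" and cont: "continuous_on {a..b} r"
    and moments: "\<And>p::nat. ((\<lambda>x. r x * x ^ p) has_integral 0) {a..b}"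
    and x: "x \<in> {a..b}"
  shows "r x = 0"
proof -
  obtain B where B: "B > 0" "\<And>x. x \<in> {a..b} \<Longrightarrow> \<bar>r x\<bar> \<le> B"
    using compact_imp_bounded[OF compact_continuous_image[OF cont compact_Icc]]
    by (auto simp: bounded_pos)
  define I where "I = integral {a..b} (\<lambda>x. r x * r x)"
  define C where "C = B * (b - a)"
  have "C \<ge> 0" using B \<open>a < b\<close> by (simp add: C_def)
  have sq_int: "((\<lambda>x. r x * r x) has_integral I) {a..b}"
    unfolding I_def by (intro integrable_integral integrable_continuous_interval continuous_intros cont)
  have approx: "I \<le> C * e" if e: "e > 0" for e
  proof -
    obtain g where g: "real_polynomial_function g" "\<And>x. x \<in> {a..b} \<Longrightarrow> \<bar>r x - g x\<bar> < e"
      using Stone_Weierstrass_real_polynomial_function[OF compact_Icc cont e] by blast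
    have "((\<lambda>x. r x * r x - r x * g x) has_integral (I - 0)) {a..b}"
      using has_integral_mult_polynomial_eq_0[OF moments g(1)] by (intro has_integral_diff sq_int)
    then have "((\<lambda>x. r x * (r x - g x)) has_integral I) (cbox a b)"
      by (simp add: algebra_simps)
    moreover have "norm (r x * (r x - g x)) \<le> B * e" if "x \<in> cbox a b" for x
      using that B(2)[of x] g(2)[of x] by (auto simp: abs_mult intro!: mult_mono)
    ultimately have "norm I \<le> B * e * measure lborel (cbox a b)"
      using B(1) e by (intro has_integral_bound) auto
    then have "norm I \<le> B * e * (b - a)"
      using \<open>a < b\<close> by simp
    then show ?thesis by (simp add: C_def mult_ac)
  qed
  have "I \<le> 0"
  proof (rule field_le_epsilon)
    fix e :: real assume "e > 0"
    have "I \<le> C * (e / (C + 1))" using \<open>e > 0\<close> \<open>C \<ge> 0\<close> by (intro approx) simp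
    also have "\<dots> \<le> e" using \<open>e > 0\<close> \<open>C \<ge> 0\<close> by (simp add: field_simps)
    finally show "I \<le> 0 + e" by simp
  qed
  moreover have "I \<ge> 0"
    using sq_int by (rule has_integral_nonneg) simp
  ultimately have "((\<lambda>x. r x * r x) has_integral 0) (cbox a b)"
    using sq_int by simp
  then have "r x * r x = 0"
    using \<open>a < b\<close> x by (intro has_integral_0_cbox_imp_0) (auto intro!: continuous_intros cont)
  then show ?thesis by simp
qed

lemma vanishing_moments_imp_zero:
  fixes h :: "real \<Rightarrow> complex"
  assumes "a < b" and cont: "continuous_on {a..b} h"
    and moments: "\<And>p::nat. ((\<lambda>x. h x * of_real x ^ p) has_integral 0) {a..b}"
    and x: "x \<in> {a..b}"
  shows "h x = 0"
proof -
  have "Re (h x) = 0"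
    using \<open>a < b\<close> _ _ x
  proof (rule vanishing_moments_imp_zero_real)
    show "continuous_on {a..b} (\<lambda>x. Re (h x))" by (intro continuous_intros cont)
    show "((\<lambda>x. Re (h x) * x ^ p) has_integral 0) {a..b}" for p
      using has_integral_linear[OF moments bounded_linear_Re] by (simp add: o_def flip: of_real_power)
  qed
  moreover have "Im (h x) = 0"
    using \<open>a < b\<close> _ _ x
  proof (rule vanishing_moments_imp_zero_real)
    show "continuous_on {a..b} (\<lambda>x. Im (h x))" by (intro continuous_intros cont)
    show "((\<lambda>x. Im (h x) * x ^ p) has_integral 0) {a..b}" for p
      using has_integral_linear[OF moments bounded_linear_Im] by (simp add: o_def flip: of_real_power)
  qed
  ultimately show ?thesis by (simp add: complex_eq_iff)
qed

section \<open>Derivatives and smooth functions on a closed interval\<close>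

lemma has_vector_derivative_powr_affine:
  fixes w :: complex and \<alpha> \<beta> x :: real
  assumes "\<alpha> + \<beta> * x > 0"
  shows "((\<lambda>t. of_real (\<alpha> + \<beta> * t) powr w) has_vector_derivative
           (\<beta> * w * of_real (\<alpha> + \<beta> * x) powr (w - 1))) (at x within S)"
proof -
  have "of_real (\<alpha> + \<beta> * x) \<notin> \<real>\<^sub>\<le>\<^sub>0"
    using assms by (simp only: nonpos_Reals_of_real_iff)
  then have "((\<lambda>z. (of_real \<alpha> + of_real \<beta> * z) powr w) has_field_derivative
               (w * of_real (\<alpha> + \<beta> * x) powr (w - 1)) * of_real \<beta>) (at (of_real x))"
    by (auto intro!: derivative_eq_intros)
  from has_vector_derivative_real_field[OF this] show ?thesis
    by (simp add: mult_ac)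
qed

lemma has_vector_derivative_of_real_power:
  "((\<lambda>t. of_real t ^ p :: complex) has_vector_derivative of_nat p * of_real x ^ (p - 1)) (at x)"
proof -
  have "((\<lambda>z::complex. z ^ p) has_field_derivative of_nat p * (1 * of_real x ^ (p - Suc 0))) (at (of_real x))"
    by (rule DERIV_power[OF DERIV_ident])
  from has_vector_derivative_real_field[OF this] show ?thesis by simp
qed

lemma has_vector_derivative_compose_real:
  fixes \<phi> :: "real \<Rightarrow> complex"
  assumes "(Y has_real_derivative Y') (at x within S)"
    and "(\<phi> has_vector_derivative \<phi>') (at (Y x) within T)" and "Y ` S \<subseteq> T"
  shows "((\<lambda>x. \<phi> (Y x)) has_vector_derivative of_real Y' * \<phi>') (at x within S)"
proof -
  have "(\<phi> has_vector_derivative \<phi>') (at (Y x) within Y ` S)"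
    using assms(2,3) by (rule has_vector_derivative_within_subset)
  with assms(1) show ?thesis
    using vector_diff_chain_within[of Y Y' x S \<phi> \<phi>']
    by (simp add: has_real_derivative_iff_has_vector_derivative o_def scaleR_conv_of_real)
qed

lemma has_vector_derivative_mult_compose:
  fixes P P' :: "real \<Rightarrow> complex" and Y Y' :: "real \<Rightarrow> real" and F :: "nat \<Rightarrow> real \<Rightarrow> complex"
  assumes P: "(P has_vector_derivative P' x) (at x within S)" "(P' has_vector_derivative P'') (at x within S)"
    and Y: "(Y has_real_derivative Y' x) (at x within S)" "(Y' has_real_derivative Y'') (at x within S)"
    and F: "\<And>n. (F n has_vector_derivative F (Suc n) (Y x)) (at (Y x) within T)" and "Y ` S \<subseteq> T"
  shows "((\<lambda>x. P x * F 0 (Y x)) has_vector_derivative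
           P' x * F 0 (Y x) + P x * of_real (Y' x) * F 1 (Y x)) (at x within S)"
    and "((\<lambda>x. P' x * F 0 (Y x) + P x * of_real (Y' x) * F 1 (Y x)) has_vector_derivative
           P'' * F 0 (Y x) + 2 * P' x * of_real (Y' x) * F 1 (Y x)
           + P x * (of_real Y'' * F 1 (Y x) + of_real (Y' x) ^ 2 * F 2 (Y x))) (at x within S)"
proof -
  have FY: "((\<lambda>x. F n (Y x)) has_vector_derivative of_real (Y' x) * F (Suc n) (Y x)) (at x within S)" for n
    using Y(1) F \<open>Y ` S \<subseteq> T\<close> by (rule has_vector_derivative_compose_real)
  have Y': "((\<lambda>x. of_real (Y' x) :: complex) has_vector_derivative of_real Y'') (at x within S)"
    using Y(2) by (rule has_vector_derivative_of_real)
  show "((\<lambda>x. P x * F 0 (Y x)) has_vector_derivative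
           P' x * F 0 (Y x) + P x * of_real (Y' x) * F 1 (Y x)) (at x within S)"
    using has_vector_derivative_mult[OF P(1) FY[of 0]] by (simp add: algebra_simps)
  have "((\<lambda>x. P' x * F 0 (Y x) + P x * of_real (Y' x) * F 1 (Y x)) has_vector_derivative
      (P' x * (of_real (Y' x) * F (Suc 0) (Y x)) + P'' * F 0 (Y x))
      + (P x * of_real (Y' x) * (of_real (Y' x) * F (Suc 1) (Y x))
         + (P x * of_real Y'' + P' x * of_real (Y' x)) * F 1 (Y x))) (at x within S)"
    by (intro has_vector_derivative_add has_vector_derivative_mult P Y' FY)
  then show "((\<lambda>x. P' x * F 0 (Y x) + P x * of_real (Y' x) * F 1 (Y x)) has_vector_derivative
           P'' * F 0 (Y x) + 2 * P' x * of_real (Y' x) * F 1 (Y x)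
           + P x * (of_real Y'' * F 1 (Y x) + of_real (Y' x) ^ 2 * F 2 (Y x))) (at x within S)"
    by (rule has_vector_derivative_eq_rhs) (simp add: algebra_simps power2_eq_square numeral_2_eq_2)
qed

lemma has_vector_derivative_eq_0_if_vanishing:
  fixes f :: "real \<Rightarrow> 'a::real_normed_vector"
  assumes "a < b" "x \<in> {a..b}" and f': "(f has_vector_derivative f') (at x within {a..b})"
    and vanishing: "\<And>y. y \<in> {a..b} \<Longrightarrow> f y = 0"
  shows "f' = 0"
proof -
  have "((\<lambda>y. 0) has_vector_derivative 0) (at x within {a..b})"
    by simp
  then have "(f has_vector_derivative 0) (at x within {a..b})"
    by (rule has_vector_derivative_transform_within[where d=1]) (use assms(2) vanishing in auto)
  with assms(1,2) f' show ?thesis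
    using vector_derivative_unique_within_closed_interval[of a b x f f' 0] by simp
qed

lemma smooth_tower_derivative:
  assumes "a < b" and tower: "smooth_tower a b f D"
    and f': "\<And>x. x \<in> {a..b} \<Longrightarrow> (f has_vector_derivative f' x) (at x within {a..b})"
  shows "smooth_tower a b f' (\<lambda>n. D (Suc n))"
  unfolding smooth_tower_def
proof (intro conjI ballI allI)
  fix x assume x: "x \<in> {a..b}"
  have "(D 0 has_vector_derivative D 1 x) (at x within {a..b})"
    using tower x by (simp add: smooth_tower_def)
  then have "(f has_vector_derivative D 1 x) (at x within {a..b})"
    by (rule has_vector_derivative_transform_within[where d=1]) (use tower x in \<open>auto simp: smooth_tower_def\<close>)
  then show "D (Suc 0) x = f' x"
    using vector_derivative_unique_within_closed_interval[of a b x f] \<open>a < b\<close> x f'[OF x] by simp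
next
  fix n x assume "x \<in> {a..b}"
  then show "(D (Suc n) has_vector_derivative D (Suc (Suc n)) x) (at x within {a..b})"
    using tower by (simp add: smooth_tower_def)
qed

lemma smooth_tower_Suc: "smooth_tower a b f D \<Longrightarrow> smooth_tower a b (D 1) (\<lambda>n. D (Suc n))"
  by (simp add: smooth_tower_def)

text \<open>A tower of derivatives is awkward to build for products and compositions; the notion of
  being n times differentiable allows induction on n instead.\<close>

fun times_differentiable_on :: "nat \<Rightarrow> real \<Rightarrow> real \<Rightarrow> (real \<Rightarrow> complex) \<Rightarrow> bool" where
  "times_differentiable_on 0 a b f \<longleftrightarrow> True"
| "times_differentiable_on (Suc n) a b f \<longleftrightarrow>
     (\<exists>f'. (\<forall>x\<in>{a..b}. (f has_vector_derivative f' x) (at x within {a..b}))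
           \<and> times_differentiable_on n a b f')"

lemma times_differentiable_on_cong:
  assumes "times_differentiable_on n a b f" and "\<And>x. x \<in> {a..b} \<Longrightarrow> f x = g x"
  shows "times_differentiable_on n a b g"
  using assms
proof (induction n arbitrary: f g)
  case (Suc n)
  then obtain f' where f': "\<forall>x\<in>{a..b}. (f has_vector_derivative f' x) (at x within {a..b})"
    "times_differentiable_on n a b f'"
    by auto
  have "(g has_vector_derivative f' x) (at x within {a..b})" if x: "x \<in> {a..b}" for x
    by (rule has_vector_derivative_transform_within[OF f'(1)[rule_format, OF x], where d=1])
       (use x Suc.prems(2) in auto)
  with f'(2) show ?case by (auto intro!: exI[of _ f'])
qed simp

lemma times_differentiable_on_Suc_imp:
  "times_differentiable_on (Suc n) a b f \<Longrightarrow> times_differentiable_on n a b f"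
  by (induction n arbitrary: f) auto

lemma times_differentiable_on_derivative:
  assumes "a < b" and "times_differentiable_on (Suc n) a b f"
    and f': "\<And>x. x \<in> {a..b} \<Longrightarrow> (f has_vector_derivative f' x) (at x within {a..b})"
  shows "times_differentiable_on n a b f'"
proof -
  obtain g where g: "\<forall>x\<in>{a..b}. (f has_vector_derivative g x) (at x within {a..b})"
    "times_differentiable_on n a b g"
    using assms(2) by auto
  show ?thesis
  proof (rule times_differentiable_on_cong[OF g(2)])
    fix x assume x: "x \<in> {a..b}"
    show "g x = f' x"
      using vector_derivative_unique_within_closed_interval[of a b x f] \<open>a < b\<close> x g(1) f'[OF x]
      by simp
  qed
qed

lemma times_differentiable_on_const: "times_differentiable_on n a b (\<lambda>x. c)"
proof (induction n arbitrary: c)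
  case (Suc n)
  have "\<forall>x\<in>{a..b}. ((\<lambda>x. c) has_vector_derivative 0) (at x within {a..b})"
    by simp
  with Suc.IH[of 0] show ?case by (auto intro!: exI[of _ "\<lambda>x. 0"])
qed simp

lemma times_differentiable_on_add:
  "times_differentiable_on n a b f \<Longrightarrow> times_differentiable_on n a b g \<Longrightarrow>
     times_differentiable_on n a b (\<lambda>x. f x + g x)"
proof (induction n arbitrary: f g)
  case (Suc n)
  obtain f' g' where
    "\<forall>x\<in>{a..b}. (f has_vector_derivative f' x) (at x within {a..b})" "times_differentiable_on n a b f'"
    "\<forall>x\<in>{a..b}. (g has_vector_derivative g' x) (at x within {a..b})" "times_differentiable_on n a b g'"
    using Suc.prems by auto
  with Suc.IH show ?case
    by (auto intro!: exI[of _ "\<lambda>x. f' x + g' x"] has_vector_derivative_add)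
qed simp

lemma times_differentiable_on_mult:
  "times_differentiable_on n a b f \<Longrightarrow> times_differentiable_on n a b g \<Longrightarrow>
     times_differentiable_on n a b (\<lambda>x. f x * g x)"
proof (induction n arbitrary: f g)
  case (Suc n)
  obtain f' g' where
    f': "\<forall>x\<in>{a..b}. (f has_vector_derivative f' x) (at x within {a..b})" "times_differentiable_on n a b f'" and
    g': "\<forall>x\<in>{a..b}. (g has_vector_derivative g' x) (at x within {a..b})" "times_differentiable_on n a b g'"
    using Suc.prems by auto
  have "times_differentiable_on n a b f" "times_differentiable_on n a b g"
    using times_differentiable_on_Suc_imp Suc.prems by blast+
  then have "times_differentiable_on n a b (\<lambda>x. f x * g' x + f' x * g x)"
    using f'(2) g'(2) by (intro times_differentiable_on_add Suc.IH)
  with f'(1) g'(1) show ?case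
    by (auto intro!: exI[of _ "\<lambda>x. f x * g' x + f' x * g x"] has_vector_derivative_mult)
qed simp

lemma smooth_cc_iff_times_differentiable_on:
  assumes "a < b"
  shows "smooth_cc a b f \<longleftrightarrow> (\<forall>n. times_differentiable_on n a b f)"
proof
  assume "smooth_cc a b f"
  then obtain D where tower: "smooth_tower a b f D"
    by (auto simp: smooth_cc_def)
  have "times_differentiable_on n a b (D k)" for n k
  proof (induction n arbitrary: k)
    case (Suc n)
    then show ?case
      using tower by (auto simp: smooth_tower_def intro!: exI[of _ "D (Suc k)"])
  qed simp
  then show "\<forall>n. times_differentiable_on n a b f"
    using tower by (auto intro: times_differentiable_on_cong simp: smooth_tower_def)
next
  assume smooth: "\<forall>n. times_differentiable_on n a b f"
  define smooth_on where "smooth_on g \<longleftrightarrow> (\<forall>n. times_differentiable_on n a b g)" for g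
  have "\<exists>g'. (\<forall>x\<in>{a..b}. (g has_vector_derivative g' x) (at x within {a..b})) \<and> smooth_on g'"
    if g: "smooth_on g" for g
  proof -
    obtain g' where g': "\<forall>x\<in>{a..b}. (g has_vector_derivative g' x) (at x within {a..b})"
      using g unfolding smooth_on_def by (metis One_nat_def times_differentiable_on.simps(2))
    moreover have "smooth_on g'"
      using g g' \<open>a < b\<close> by (auto simp: smooth_on_def intro: times_differentiable_on_derivative)
    ultimately show ?thesis by blast
  qed
  then obtain der where der: "\<And>g. smooth_on g \<Longrightarrow>
      (\<forall>x\<in>{a..b}. (g has_vector_derivative der g x) (at x within {a..b})) \<and> smooth_on (der g)"
    by metis
  define D where "D k = (der ^^ k) f" for k
  have "smooth_on (D k)" for k
    by (induction k) (use smooth der in \<open>auto simp: D_def smooth_on_def\<close>)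
  then have "smooth_tower a b f D"
    using der by (auto simp: smooth_tower_def D_def)
  then show "smooth_cc a b f"
    by (auto simp: smooth_cc_def)
qed

lemma smooth_cc_cong:
  "a < b \<Longrightarrow> smooth_cc a b f \<Longrightarrow> (\<And>x. x \<in> {a..b} \<Longrightarrow> f x = g x) \<Longrightarrow> smooth_cc a b g"
  by (auto simp: smooth_cc_iff_times_differentiable_on intro: times_differentiable_on_cong)

lemma smooth_cc_const: "a < b \<Longrightarrow> smooth_cc a b (\<lambda>x. c)"
  by (simp add: smooth_cc_iff_times_differentiable_on times_differentiable_on_const)

lemma smooth_cc_mult:
  "a < b \<Longrightarrow> smooth_cc a b f \<Longrightarrow> smooth_cc a b g \<Longrightarrow> smooth_cc a b (\<lambda>x. f x * g x)"
  by (simp add: smooth_cc_iff_times_differentiable_on times_differentiable_on_mult)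

lemma smooth_cc_powr_affine:
  fixes \<alpha> \<beta> :: real
  assumes "a < b" and pos: "\<And>x. x \<in> {a..b} \<Longrightarrow> \<alpha> + \<beta> * x > 0"
  shows "smooth_cc a b (\<lambda>x. of_real (\<alpha> + \<beta> * x) powr w)"
proof -
  have "times_differentiable_on n a b (\<lambda>x. of_real (\<alpha> + \<beta> * x) powr w)" for n
  proof (induction n arbitrary: w)
    case (Suc n)
    have "\<forall>x\<in>{a..b}. ((\<lambda>x. of_real (\<alpha> + \<beta> * x) powr w) has_vector_derivative
        \<beta> * w * of_real (\<alpha> + \<beta> * x) powr (w - 1)) (at x within {a..b})"
      using pos has_vector_derivative_powr_affine by blast
    moreover have "times_differentiable_on n a b (\<lambda>x. \<beta> * w * of_real (\<alpha> + \<beta> * x) powr (w - 1))"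
      by (intro times_differentiable_on_mult times_differentiable_on_const Suc.IH)
    ultimately show ?case
      by (auto intro!: exI[of _ "\<lambda>x. \<beta> * w * of_real (\<alpha> + \<beta> * x) powr (w - 1)"])
  qed simp
  with assms(1) show ?thesis
    by (simp add: smooth_cc_iff_times_differentiable_on)
qed

lemma smooth_cc_compose:
  fixes Y Y' :: "real \<Rightarrow> real"
  assumes "a < b" "c < d" and Y: "Y ` {a..b} \<subseteq> {c..d}"
    and Y': "\<And>x. x \<in> {a..b} \<Longrightarrow> (Y has_real_derivative Y' x) (at x within {a..b})"
    and smooth_Y': "smooth_cc a b (\<lambda>x. of_real (Y' x))"
    and smooth_\<phi>: "smooth_cc c d \<phi>"
  shows "smooth_cc a b (\<lambda>x. \<phi> (Y x))"
proof -
  have "\<forall>\<phi> D. smooth_tower c d \<phi> D \<longrightarrow> times_differentiable_on n a b (\<lambda>x. \<phi> (Y x))" for n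
  proof (induction n)
    case (Suc n)
    show ?case
    proof (intro allI impI)
      fix \<phi> D assume tower: "smooth_tower c d \<phi> D"
      have "((\<lambda>x. \<phi> (Y x)) has_vector_derivative of_real (Y' x) * D 1 (Y x)) (at x within {a..b})"
        if x: "x \<in> {a..b}" for x
      proof (rule has_vector_derivative_compose_real[OF Y'[OF x] _ Y])
        have "Y x \<in> {c..d}" using Y x by blast
        with tower show "(\<phi> has_vector_derivative D 1 (Y x)) (at (Y x) within {c..d})"
          using has_vector_derivative_transform_within[of "D 0" "D 1 (Y x)" "Y x" "{c..d}" 1 \<phi>]
          by (auto simp: smooth_tower_def)
      qed
      moreover have "times_differentiable_on n a b (\<lambda>x. of_real (Y' x) * D 1 (Y x))"
        using smooth_Y' \<open>a < b\<close> Suc.IH smooth_tower_Suc[OF tower]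
        by (intro times_differentiable_on_mult) (auto simp: smooth_cc_iff_times_differentiable_on)
      ultimately show "times_differentiable_on (Suc n) a b (\<lambda>x. \<phi> (Y x))"
        by (auto intro!: exI[of _ "\<lambda>x. of_real (Y' x) * D 1 (Y x)"])
    qed
  qed simp
  then have "times_differentiable_on n a b (\<lambda>x. \<phi> (Y x))" for n
    using smooth_\<phi> by (auto simp: smooth_cc_def)
  with \<open>a < b\<close> show ?thesis
    by (simp add: smooth_cc_iff_times_differentiable_on)
qed

section \<open>The hypergeometric operator\<close>

text \<open>In Gauss' notation x(1-x)u'' + (\<gamma> - (\<alpha>+\<beta>+1)x)u' - \<alpha>\<beta>u one has \<gamma> = c,
  \<alpha>+\<beta>+1 = c+d and \<alpha>\<beta> = e; splitting \<alpha>+\<beta>+1 in this way makes the weight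
  x^(c-1) (1-x)^(d-1) symmetrize the operator.\<close>

definition hypergeometric_op ::
    "complex \<Rightarrow> complex \<Rightarrow> complex \<Rightarrow> real \<Rightarrow> complex \<Rightarrow> complex \<Rightarrow> complex \<Rightarrow> complex" where
  "hypergeometric_op c d e x u u' u'' =
     of_real (x * (1 - x)) * u'' + (c - (c + d) * of_real x) * u' - e * u"

definition hypergeometric_weight :: "complex \<Rightarrow> complex \<Rightarrow> real \<Rightarrow> complex" where
  "hypergeometric_weight c d x = of_real x powr (c - 1) * of_real (1 - x) powr (d - 1)"

lemma hypergeometric_divergence_form:
  fixes u g :: "real \<Rightarrow> complex"
  assumes x: "0 < x" "x < 1"
    and du: "(u has_vector_derivative u' x) (at x)" and du': "(u' has_vector_derivative u'') (at x)"
    and dg: "(g has_vector_derivative g' x) (at x)" and dg': "(g' has_vector_derivative g'') (at x)"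
    and eq: "hypergeometric_op c d e x (u x) (u' x) u'' = 0"
  shows "((\<lambda>t. of_real t powr c * of_real (1 - t) powr d * (g t * u' t - g' t * u t))
           has_vector_derivative
           - (hypergeometric_weight c d x * u x * hypergeometric_op c d e x (g x) (g' x) g'')) (at x)"
proof -
  define X where "X = of_real x powr (c - 1)"
  define Y where "Y = of_real (1 - x) powr (d - 1)"
  have X: "of_real x powr c = X * of_real x"
    using powr_add[of "of_real x" "c - 1" 1] x by (simp add: X_def)
  have Y: "of_real (1 - x) powr d = Y * (1 - of_real x)"
    using powr_add[of "of_real (1 - x)" "d - 1" 1] x by (simp add: Y_def)
  have "((\<lambda>t. of_real t powr c) has_vector_derivative c * X) (at x)"
    using has_vector_derivative_powr_affine[of 0 1 x c] x by (simp add: X_def)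
  moreover have "((\<lambda>t. of_real (1 - t) powr d) has_vector_derivative - (d * Y)) (at x)"
    using has_vector_derivative_powr_affine[of 1 "-1" x d] x by (simp add: Y_def)
  ultimately have "((\<lambda>t. of_real t powr c * of_real (1 - t) powr d * (g t * u' t - g' t * u t))
      has_vector_derivative
      of_real x powr c * of_real (1 - x) powr d * ((g x * u'' + g' x * u' x) - (g' x * u' x + g'' * u x))
      + (of_real x powr c * - (d * Y) + c * X * of_real (1 - x) powr d) * (g x * u' x - g' x * u x)) (at x)"
    by (intro has_vector_derivative_mult has_vector_derivative_diff du du' dg dg')
  moreover have "of_real x * (1 - of_real x) * u'' + (c - (c + d) * of_real x) * u' x - e * u x = 0"
    using eq by (simp add: hypergeometric_op_def)
  ultimately show ?thesis
    unfolding X Y hypergeometric_op_def hypergeometric_weight_def X_def[symmetric] Y_def[symmetric]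
    unfolding of_real_mult of_real_diff of_real_1
    by (elim has_vector_derivative_eq_rhs) algebra
qed

lemma hypergeometric_weighted_integral_eq_0:
  fixes u g :: "real \<Rightarrow> complex"
  assumes "Re c > 0" "Re d > 0"
    and du: "\<And>x. x \<in> {0..1} \<Longrightarrow> (u has_vector_derivative u' x) (at x within {0..1})"
    and du': "\<And>x. x \<in> {0..1} \<Longrightarrow> (u' has_vector_derivative u'' x) (at x within {0..1})"
    and eq: "\<And>x. x \<in> {0..1} \<Longrightarrow> hypergeometric_op c d e x (u x) (u' x) (u'' x) = 0"
    and dg: "\<And>x. (g has_vector_derivative g' x) (at x)"
    and dg': "\<And>x. (g' has_vector_derivative g'' x) (at x)"
  shows "((\<lambda>x. hypergeometric_weight c d x * u x * hypergeometric_op c d e x (g x) (g' x) (g'' x))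
           has_integral 0) {0..1}"
proof -
  define F where "F t = of_real t powr c * of_real (1 - t) powr d * (g t * u' t - g' t * u t)" for t
  have "continuous_on {0..1} u" "continuous_on {0..1} u'"
    unfolding continuous_on_eq_continuous_within
    using has_vector_derivative_continuous[OF du] has_vector_derivative_continuous[OF du'] by blast+
  moreover have "continuous_on {0..1} g" "continuous_on {0..1} g'"
    using dg dg' by (auto intro!: continuous_at_imp_continuous_on has_vector_derivative_continuous)
  moreover have "continuous_on {0..1} (\<lambda>t. of_real t powr c)"
    using assms(1) by (intro continuous_on_powr_complex continuous_intros) auto
  moreover have "continuous_on {0..1} (\<lambda>t. of_real (1 - t) powr d)"
    using assms(2) by (intro continuous_on_powr_complex continuous_intros) auto
  ultimately have "continuous_on {0..1} F"
    unfolding F_def by (intro continuous_on_mult continuous_on_diff)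
  moreover have "(F has_vector_derivative
      - (hypergeometric_weight c d x * u x * hypergeometric_op c d e x (g x) (g' x) (g'' x))) (at x)"
    if x: "x \<in> {0<..<1}" for x
  proof -
    have "at x within {0..1} = at x"
      using x by (intro at_within_interior) auto
    then show ?thesis
      unfolding F_def using x du[of x] du'[of x] eq[of x]
      by (intro hypergeometric_divergence_form dg dg') auto
  qed
  ultimately have "((\<lambda>x. - (hypergeometric_weight c d x * u x * hypergeometric_op c d e x (g x) (g' x) (g'' x)))
      has_integral (F 1 - F 0)) {0..1}"
    by (intro fundamental_theorem_of_calculus_interior) auto
  moreover have "F 1 = 0" "F 0 = 0"
    unfolding F_def using assms(1,2) by auto
  ultimately have "((\<lambda>x. - (hypergeometric_weight c d x * u x * hypergeometric_op c d e x (g x) (g' x) (g'' x)))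
      has_integral 0) {0..1}"
    by simp
  from has_integral_neg[OF this] show ?thesis by simp
qed

lemma hypergeometric_op_power:
  "hypergeometric_op c d e x (of_real x ^ p) (of_nat p * of_real x ^ (p - 1))
       (of_nat p * of_nat (p - 1) * of_real x ^ (p - 2))
     = of_nat p * (of_nat p + c - 1) * of_real x ^ (p - 1)
       - (e + of_nat p * (c + d + of_nat p - 1)) * of_real x ^ p"
proof -
  consider "p = 0" | "p = 1" | q where "p = q + 2"
    by (metis One_nat_def add_2_eq_Suc' not0_implies_Suc)
  then show ?thesis
  proof cases
    case (3 q)
    have "of_real x ^ p = of_real x * of_real x * (of_real x ^ q :: complex)"
      "of_real x ^ (p - 1) = of_real x * (of_real x ^ q :: complex)"
      "of_nat p = of_nat q + (2 :: complex)" "of_nat (p - 1) = of_nat q + (1 :: complex)"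
      using 3 by (simp_all add: power_add power2_eq_square)
    then show ?thesis
      using 3 unfolding hypergeometric_op_def by (simp add: algebra_simps)
  qed (simp_all add: hypergeometric_op_def algebra_simps)
qed

lemma hypergeometric_moment_recurrence:
  fixes u :: "real \<Rightarrow> complex"
  assumes "Re c > 0" "Re d > 0"
    and du: "\<And>x. x \<in> {0..1} \<Longrightarrow> (u has_vector_derivative u' x) (at x within {0..1})"
    and du': "\<And>x. x \<in> {0..1} \<Longrightarrow> (u' has_vector_derivative u'' x) (at x within {0..1})"
    and eq: "\<And>x. x \<in> {0..1} \<Longrightarrow> hypergeometric_op c d e x (u x) (u' x) (u'' x) = 0"
    and moment: "\<And>p. ((\<lambda>x. hypergeometric_weight c d x * u x * of_real x ^ p) has_integral m p) {0..1}"
  shows "of_nat p * (of_nat p + c - 1) * m (p - 1) = (e + of_nat p * (c + d + of_nat p - 1)) * m p"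
proof -
  define A where "A = of_nat p * (of_nat p + c - 1)"
  define B where "B = e + of_nat p * (c + d + of_nat p - 1)"
  define h where "h x = hypergeometric_weight c d x * u x" for x
  have dg': "((\<lambda>x. of_nat p * of_real x ^ (p - 1) :: complex) has_vector_derivative
      of_nat p * of_nat (p - 1) * of_real x ^ (p - 2)) (at x)" for x
    using has_vector_derivative_mult_right[OF has_vector_derivative_of_real_power, of "of_nat p" "p - 1" x]
    by (simp add: mult.assoc numeral_2_eq_2)
  have "((\<lambda>x. h x * hypergeometric_op c d e x (of_real x ^ p) (of_nat p * of_real x ^ (p - 1))
      (of_nat p * of_nat (p - 1) * of_real x ^ (p - 2))) has_integral 0) {0..1}"
    unfolding h_def using assms(1,2)
    by (intro hypergeometric_weighted_integral_eq_0[OF _ _ du du' eq has_vector_derivative_of_real_power dg'])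
  also have "(\<lambda>x. h x * hypergeometric_op c d e x (of_real x ^ p) (of_nat p * of_real x ^ (p - 1))
      (of_nat p * of_nat (p - 1) * of_real x ^ (p - 2)))
    = (\<lambda>x. A * (h x * of_real x ^ (p - 1)) - B * (h x * of_real x ^ p))"
    unfolding hypergeometric_op_power A_def[symmetric] B_def[symmetric] by (rule ext) algebra
  finally have "((\<lambda>x. A * (h x * of_real x ^ (p - 1)) - B * (h x * of_real x ^ p)) has_integral 0) {0..1}" .
  moreover have "((\<lambda>x. A * (h x * of_real x ^ (p - 1)) - B * (h x * of_real x ^ p))
      has_integral A * m (p - 1) - B * m p) {0..1}"
    unfolding h_def by (intro has_integral_diff has_integral_mult_right moment)
  ultimately have "A * m (p - 1) - B * m p = 0"
    by (rule has_integral_unique[symmetric])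
  then show ?thesis
    unfolding A_def[symmetric] B_def[symmetric] by simp
qed

lemma hypergeometric_solution_eq_0:
  fixes u :: "real \<Rightarrow> complex"
  assumes "Re c > 1" "Re d > 1"
    and du: "\<And>x. x \<in> {0..1} \<Longrightarrow> (u has_vector_derivative u' x) (at x within {0..1})"
    and du': "\<And>x. x \<in> {0..1} \<Longrightarrow> (u' has_vector_derivative u'' x) (at x within {0..1})"
    and eq: "\<And>x. x \<in> {0..1} \<Longrightarrow> hypergeometric_op c d e x (u x) (u' x) (u'' x) = 0"
    and nondegenerate: "\<And>n::nat. e + of_nat n * (c + d + of_nat n - 1) \<noteq> 0"
    and x: "x \<in> {0..1}"
  shows "u x = 0"
proof -
  define h where "h t = hypergeometric_weight c d t * u t" for t
  have cont_u: "continuous_on {0..1} u"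
    unfolding continuous_on_eq_continuous_within using has_vector_derivative_continuous[OF du] by blast
  have "continuous_on {0..1} (hypergeometric_weight c d)"
    unfolding hypergeometric_weight_def using assms(1,2)
    by (intro continuous_on_mult continuous_on_powr_complex continuous_intros) auto
  then have cont_h: "continuous_on {0..1} h"
    unfolding h_def by (intro continuous_on_mult cont_u)
  define m where "m p = integral {0..1} (\<lambda>t. h t * of_real t ^ p)" for p :: nat
  have moment: "((\<lambda>t. h t * of_real t ^ p) has_integral m p) {0..1}" for p
    unfolding m_def by (intro integrable_integral integrable_continuous_interval continuous_intros cont_h)
  have "Re c > 0" "Re d > 0"
    using assms(1,2) by auto
  note recurrence = hypergeometric_moment_recurrence[OF this du du' eq moment[unfolded h_def]]
  have m_eq_0: "m p = 0" for p
  proof (induction p)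
    case 0
    then show ?case using recurrence[of 0] nondegenerate[of 0] by simp
  next
    case (Suc p)
    then show ?case using recurrence[of "Suc p"] nondegenerate[of "Suc p"] by simp
  qed
  have h_eq_0: "h t = 0" if "t \<in> {0..1}" for t
    using moment[unfolded m_eq_0] by (intro vanishing_moments_imp_zero[OF _ cont_h _ that]) auto
  have "u t = 0" if t: "t \<in> {0<..<1}" for t
    using h_eq_0[of t] t by (auto simp: h_def hypergeometric_weight_def)
  moreover have "closure {0<..<1::real} = {0..1}"
    by simp
  ultimately show ?thesis
    using continuous_constant_on_closure[of "{0<..<1}" u] cont_u x by metis
qed

lemma hypergeometric_tower_shift:
  assumes tower: "\<And>n x. x \<in> {0..1} \<Longrightarrow> (D n has_vector_derivative D (Suc n) x) (at x within {0..1})"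
    and eq: "\<And>x. x \<in> {0..1} \<Longrightarrow> hypergeometric_op c d e x (D 0 x) (D 1 x) (D 2 x) = 0"
    and x: "x \<in> {0..1}"
  shows "hypergeometric_op (c + of_nat k) (d + of_nat k) (e + of_nat k * (c + d + of_nat k - 1)) x
           (D k x) (D (Suc k) x) (D (Suc (Suc k)) x) = 0"
  using x
proof (induction k arbitrary: x)
  case 0
  then show ?case using eq by (simp add: numeral_2_eq_2)
next
  case (Suc k)
  define c' where "c' = c + of_nat k"
  define d' where "d' = d + of_nat k"
  define e' where "e' = e + of_nat k * (c + d + of_nat k - 1)"
  have "((\<lambda>t. of_real (t * (1 - t)) :: complex) has_vector_derivative of_real (1 - 2 * x)) (at x within {0..1})"
    by (rule has_vector_derivative_of_real) (auto intro!: derivative_eq_intros)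
  moreover have "((\<lambda>t. c' - (c' + d') * of_real t) has_vector_derivative - (c' + d')) (at x within {0..1})"
    by (rule has_vector_derivative_real_field) (auto intro!: derivative_eq_intros)
  ultimately have deriv: "((\<lambda>t. hypergeometric_op c' d' e' t (D k t) (D (Suc k) t) (D (Suc (Suc k)) t))
      has_vector_derivative
      of_real (x * (1 - x)) * D (Suc (Suc (Suc k))) x + of_real (1 - 2 * x) * D (Suc (Suc k)) x
      + ((c' - (c' + d') * of_real x) * D (Suc (Suc k)) x + - (c' + d') * D (Suc k) x)
      - e' * D (Suc k) x) (at x within {0..1})"
    unfolding hypergeometric_op_def
    by (intro has_vector_derivative_diff has_vector_derivative_add has_vector_derivative_mult
        has_vector_derivative_mult_right tower Suc.prems)
  have "of_real (x * (1 - x)) * D (Suc (Suc (Suc k))) x + of_real (1 - 2 * x) * D (Suc (Suc k)) x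
      + ((c' - (c' + d') * of_real x) * D (Suc (Suc k)) x + - (c' + d') * D (Suc k) x)
      - e' * D (Suc k) x = 0"
    by (rule has_vector_derivative_eq_0_if_vanishing[OF _ Suc.prems deriv])
       (simp_all add: c'_def d'_def e'_def Suc.IH)
  then show ?case
    unfolding hypergeometric_op_def c'_def d'_def e'_def of_nat_Suc
    unfolding of_real_mult of_real_diff of_real_1 of_real_numeral
    by algebra
qed

theorem hypergeometric_smooth_solution_eq_0:
  assumes tower: "smooth_tower 0 1 u D"
    and eq: "\<And>x. x \<in> {0..1} \<Longrightarrow> hypergeometric_op c d e x (D 0 x) (D 1 x) (D 2 x) = 0"
    and nondegenerate: "\<And>n::nat. e + of_nat n * (c + d + of_nat n - 1) \<noteq> 0"
    and x: "x \<in> {0..1}"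
  shows "u x = 0"
proof -
  define e' where "e' k = e + of_nat k * (c + d + of_nat k - 1)" for k :: nat
  have D': "\<And>n x. x \<in> {0..1} \<Longrightarrow> (D n has_vector_derivative D (Suc n) x) (at x within {0..1})"
    using tower by (simp add: smooth_tower_def)
  have shifted: "hypergeometric_op (c + of_nat k) (d + of_nat k) (e' k) y (D k y) (D (Suc k) y) (D (Suc (Suc k)) y) = 0"
    if "y \<in> {0..1}" for k y
    unfolding e'_def by (rule hypergeometric_tower_shift[OF D' eq that])
  obtain N :: nat where "real N > max (1 - Re c) (1 - Re d)"
    using reals_Archimedean2 by blast
  then have N: "Re c + real N > 1" "Re d + real N > 1"
    by auto
  have high: "D k y = 0" if "k \<ge> N" "y \<in> {0..1}" for k y
  proof (rule hypergeometric_solution_eq_0[OF _ _ D' D' shifted _ that(2)])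
    show "Re (c + of_nat k) > 1" "Re (d + of_nat k) > 1"
      using N that(1) by auto
    have "e' k + of_nat n * (c + of_nat k + (d + of_nat k) + of_nat n - 1) = e' (k + n)" for n
      unfolding e'_def of_nat_add by algebra
    then show "e' k + of_nat n * (c + of_nat k + (d + of_nat k) + of_nat n - 1) \<noteq> 0" for n
      using nondegenerate[of "k + n"] unfolding e'_def by metis
  qed
  have "\<forall>y\<in>{0..1}. D k y = 0 \<and> D (Suc k) y = 0" if "k \<le> N" for k
    using that
  proof (induction k rule: inc_induct)
    case (step k)
    have "D k y = 0" if y: "y \<in> {0..1}" for y
    proof -
      have "D (Suc k) y = 0" "D (Suc (Suc k)) y = 0"
        using step.IH y by auto
      then have "e' k * D k y = 0"
        using shifted[OF y, of k] by (simp add: hypergeometric_op_def)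
      then show ?thesis
        using nondegenerate[of k] by (simp add: e'_def)
    qed
    with step.IH show ?case by blast
  qed (use high in auto)
  then have "D 0 x = 0"
    using x by blast
  then show ?thesis
    using tower x by (simp add: smooth_tower_def)
qed

section \<open>The Moebius substitution\<close>

definition moebius_subst :: "real \<Rightarrow> real \<Rightarrow> real" where
  "moebius_subst s x = (s\<^sup>2 - 1) / (s + 1 - 2 * x) - s"

definition moebius_factor :: "real \<Rightarrow> complex \<Rightarrow> real \<Rightarrow> complex" where
  "moebius_factor s w x = of_real (s + 1 - 2 * x) powr w"

lemma inversion_maps_interval:
  fixes s u :: real
  assumes "s > 1" "u \<in> {s - 1..s + 1}"
  shows "(s\<^sup>2 - 1) / u \<in> {s - 1..s + 1}"
proof -
  have "s\<^sup>2 - 1 = (s - 1) * (s + 1)"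
    by (simp add: power2_eq_square algebra_simps)
  moreover have "(s - 1) * (s + 1) / u \<le> (s - 1) * (s + 1) / (s - 1)"
    using assms by (intro divide_left_mono) auto
  moreover have "(s - 1) * (s + 1) / (s + 1) \<le> (s - 1) * (s + 1) / u"
    using assms by (intro divide_left_mono) auto
  ultimately show ?thesis
    using assms(1) by auto
qed

lemma moebius_image:
  assumes "s > 1"
  shows "moebius_subst s ` {0..1} = {-1..1}"
proof (intro equalityI image_subsetI subsetI)
  fix x :: real assume "x \<in> {0..1}"
  then have "(s\<^sup>2 - 1) / (s + 1 - 2 * x) \<in> {s - 1..s + 1}"
    using assms by (intro inversion_maps_interval) auto
  then show "moebius_subst s x \<in> {-1..1}"
    by (auto simp: moebius_subst_def)
next
  fix y :: real assume y: "y \<in> {-1..1}"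
  define t where "t = (s\<^sup>2 - 1) / (y + s)"
  have "t \<in> {s - 1..s + 1}"
    using assms y unfolding t_def by (intro inversion_maps_interval) auto
  then have "(s + 1 - t) / 2 \<in> {0..1}"
    by auto
  moreover have "y + s \<noteq> 0" "s\<^sup>2 - 1 \<noteq> 0"
    using assms y less_1_mult[OF assms assms] by (auto simp: power2_eq_square)
  then have "(s\<^sup>2 - 1) / t - s = y"
    by (simp add: t_def)
  moreover have "s + 1 - 2 * ((s + 1 - t) / 2) = t"
    by (simp add: field_simps)
  ultimately show "y \<in> moebius_subst s ` {0..1}"
    unfolding moebius_subst_def by (metis (no_types, lifting) image_eqI)
qed

lemma has_real_derivative_moebius:
  assumes "s + 1 - 2 * x \<noteq> 0"
  shows "(moebius_subst s has_real_derivative 2 * (s\<^sup>2 - 1) / (s + 1 - 2 * x)\<^sup>2) (at x within S)"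
  unfolding moebius_subst_def[abs_def] using assms
  by (auto intro!: derivative_eq_intros) (simp add: divide_simps power2_eq_square)

lemma has_real_derivative_moebius_derivative:
  assumes "s + 1 - 2 * x \<noteq> 0"
  shows "((\<lambda>x. 2 * (s\<^sup>2 - 1) / (s + 1 - 2 * x)\<^sup>2) has_real_derivative 8 * (s\<^sup>2 - 1) / (s + 1 - 2 * x) ^ 3)
           (at x within S)"
  using assms
  by (auto intro!: derivative_eq_intros simp: divide_simps power2_eq_square power3_eq_cube)
     (simp add: algebra_simps)

lemma has_vector_derivative_moebius_factor:
  assumes "s + 1 - 2 * x > 0"
  shows "(moebius_factor s w has_vector_derivative - 2 * w * moebius_factor s (w - 1) x) (at x within S)"
  using has_vector_derivative_powr_affine[of "s + 1" "-2" x w] assms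
  unfolding moebius_factor_def[abs_def] by (simp add: mult_ac)

lemma moebius_factor_diff_nat:
  "moebius_factor s (w - of_nat n) x = moebius_factor s w x / of_real (s + 1 - 2 * x) ^ n"
  using powr_diff[of "of_real (s + 1 - 2 * x)" w "of_nat n"] powr_nat'[of "of_real (s + 1 - 2 * x)" n]
  by (cases n) (auto simp: moebius_factor_def)

lemma smooth_cc_moebius_factor:
  "s > 1 \<Longrightarrow> smooth_cc 0 1 (moebius_factor s w)"
  using smooth_cc_powr_affine[of 0 1 "s + 1" "-2" w] unfolding moebius_factor_def[abs_def] by simp

lemma smooth_cc_moebius_pullback:
  assumes "s > 1" and "smooth_cc (-1) 1 \<phi>"
  shows "smooth_cc 0 1 (\<lambda>x. moebius_factor s w x * \<phi> (moebius_subst s x))"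
proof -
  have "smooth_cc 0 1 (\<lambda>x. of_real (2 * (s\<^sup>2 - 1)) * moebius_factor s (-2) x)"
    using \<open>s > 1\<close> by (intro smooth_cc_mult smooth_cc_const smooth_cc_moebius_factor) auto
  then have "smooth_cc 0 1 (\<lambda>x. of_real (2 * (s\<^sup>2 - 1) / (s + 1 - 2 * x)\<^sup>2))"
  proof (rule smooth_cc_cong[rotated])
    fix x :: real assume "x \<in> {0..1}"
    then show "of_real (2 * (s\<^sup>2 - 1)) * moebius_factor s (-2) x = of_real (2 * (s\<^sup>2 - 1) / (s + 1 - 2 * x)\<^sup>2)"
      using moebius_factor_diff_nat[of s 0 2 x] by (simp add: moebius_factor_def divide_inverse)
  qed simp
  then have "smooth_cc 0 1 (\<lambda>x. \<phi> (moebius_subst s x))"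
    using \<open>s > 1\<close> moebius_image[OF \<open>s > 1\<close>] assms(2)
    by (intro smooth_cc_compose[OF _ _ _ has_real_derivative_moebius]) auto
  then show ?thesis
    using \<open>s > 1\<close> by (intro smooth_cc_mult smooth_cc_moebius_factor) auto
qed

lemma hypergeometric_op_moebius_transform:
  fixes s t :: real and l P P1 P2 F0 F1 F2 :: complex
  assumes "t \<noteq> 0" "s\<^sup>2 \<noteq> 1" and P1: "of_real t * P1 = P" and P2: "of_real t ^ 2 * P2 = P"
  defines "y \<equiv> (s\<^sup>2 - 1) / t - s"
  shows "hypergeometric_op (l - of_real s) (l + of_real s) (l * (l - 1)) ((s + 1 - t) / 2) (P * F0)
      (2 * l * P1 * F0 + P * of_real (2 * (s\<^sup>2 - 1) / t\<^sup>2) * F1)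
      (4 * l * (l + 1) * P2 * F0 + 2 * (2 * l * P1) * of_real (2 * (s\<^sup>2 - 1) / t\<^sup>2) * F1
        + P * (of_real (8 * (s\<^sup>2 - 1) / t ^ 3) * F1 + of_real (2 * (s\<^sup>2 - 1) / t\<^sup>2) ^ 2 * F2))
    = - of_real ((s\<^sup>2 - 1) / t\<^sup>2) * P *
        ((l\<^sup>2 + l) * F0 + ((2 * l + 2) * of_real y + of_real (2 * (s\<^sup>2 - 1) / (s + y))) * F1
         + of_real (y\<^sup>2 - 1) * F2)"
proof -
  define S where "S = complex_of_real s"
  define T where "T = complex_of_real t"
  define U where "U = inverse T"
  have "T * U = 1"
    using assms(1) by (simp add: T_def U_def)
  have "S\<^sup>2 - 1 \<noteq> 0"
    using assms(2) unfolding S_def by (metis of_real_1 of_real_eq_iff of_real_power right_minus_eq)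
  then have "2 * (S\<^sup>2 - 1) / (S + ((S\<^sup>2 - 1) / T - S)) = 2 * T"
    using assms(1) by (simp add: T_def field_simps)
  then have rational_term: "of_real (2 * (s\<^sup>2 - 1) / (s + y)) = 2 * T"
    unfolding y_def S_def T_def by simp
  define X where "X = (S + 1 - T) / 2"
  have "2 * X = S + 1 - T"
    by (simp add: X_def)
  have divisions: "A / T = A * U" "A / T ^ 2 = A * U ^ 2" "A / T ^ 3 = A * U ^ 3" for A
    by (simp_all add: U_def divide_inverse power_inverse)
  show ?thesis
    unfolding rational_term
    unfolding hypergeometric_op_def y_def of_real_mult of_real_diff of_real_add of_real_divide
      of_real_power of_real_1 of_real_numeral S_def[symmetric] T_def[symmetric] divisions X_def[symmetric]
    using \<open>T * U = 1\<close> \<open>2 * X = S + 1 - T\<close> P1 P2 unfolding T_def[symmetric] by algebra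
qed

lemma hypergeometric_op_moebius_pullback:
  fixes s :: real and l F0 F1 F2 :: complex
  assumes "s > 1" "x \<in> {0..1}"
  defines "Y' \<equiv> 2 * (s\<^sup>2 - 1) / (s + 1 - 2 * x)\<^sup>2" and "y \<equiv> moebius_subst s x"
  shows "hypergeometric_op (l - of_real s) (l + of_real s) (l * (l - 1)) x
      (moebius_factor s (- l) x * F0)
      (2 * l * moebius_factor s (- l - 1) x * F0 + moebius_factor s (- l) x * of_real Y' * F1)
      (4 * l * (l + 1) * moebius_factor s (- l - 2) x * F0
        + 2 * (2 * l * moebius_factor s (- l - 1) x) * of_real Y' * F1
        + moebius_factor s (- l) x * (of_real (8 * (s\<^sup>2 - 1) / (s + 1 - 2 * x) ^ 3) * F1 + of_real Y' ^ 2 * F2))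
    = - of_real ((s\<^sup>2 - 1) / (s + 1 - 2 * x)\<^sup>2) * moebius_factor s (- l) x *
        ((l\<^sup>2 + l) * F0 + ((2 * l + 2) * of_real y + of_real (2 * (s\<^sup>2 - 1) / (s + y))) * F1
         + of_real (y\<^sup>2 - 1) * F2)"
proof -
  have denom_nz: "s + 1 - 2 * x \<noteq> 0" and s_sq: "s\<^sup>2 \<noteq> 1"
    using assms(1,2) less_1_mult[OF \<open>s > 1\<close> \<open>s > 1\<close>] by (auto simp: power2_eq_square)
  then have "(of_real (s + 1 - 2 * x) :: complex) \<noteq> 0"
    by (simp only: of_real_eq_0_iff not_False_eq_True)
  then have P1: "of_real (s + 1 - 2 * x) * moebius_factor s (- l - 1) x = moebius_factor s (- l) x"
    and P2: "of_real (s + 1 - 2 * x) ^ 2 * moebius_factor s (- l - 2) x = moebius_factor s (- l) x"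
    using moebius_factor_diff_nat[of s "- l" 1 x] moebius_factor_diff_nat[of s "- l" 2 x]
    by simp_all
  have "hypergeometric_op (l - of_real s) (l + of_real s) (l * (l - 1)) ((s + 1 - (s + 1 - 2 * x)) / 2)
      (moebius_factor s (- l) x * F0)
      (2 * l * moebius_factor s (- l - 1) x * F0 + moebius_factor s (- l) x * of_real Y' * F1)
      (4 * l * (l + 1) * moebius_factor s (- l - 2) x * F0
        + 2 * (2 * l * moebius_factor s (- l - 1) x) * of_real Y' * F1
        + moebius_factor s (- l) x * (of_real (8 * (s\<^sup>2 - 1) / (s + 1 - 2 * x) ^ 3) * F1 + of_real Y' ^ 2 * F2))
    = - of_real ((s\<^sup>2 - 1) / (s + 1 - 2 * x)\<^sup>2) * moebius_factor s (- l) x *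
        ((l\<^sup>2 + l) * F0 + ((2 * l + 2) * of_real y + of_real (2 * (s\<^sup>2 - 1) / (s + y))) * F1
         + of_real (y\<^sup>2 - 1) * F2)"
    unfolding Y'_def y_def moebius_subst_def by (rule hypergeometric_op_moebius_transform[OF denom_nz s_sq P1 P2])
  then show ?thesis
    by simp
qed

lemma moebius_pullback_has_derivatives:
  fixes s :: real and l :: complex and D :: "nat \<Rightarrow> real \<Rightarrow> complex"
  assumes "s > 1" and x: "x \<in> {0..1}"
    and D: "\<And>n y. y \<in> {-1..1} \<Longrightarrow> (D n has_vector_derivative D (Suc n) y) (at y within {-1..1})"
  defines "Y' \<equiv> \<lambda>x. 2 * (s\<^sup>2 - 1) / (s + 1 - 2 * x)\<^sup>2"
  shows "((\<lambda>x. moebius_factor s (- l) x * D 0 (moebius_subst s x)) has_vector_derivative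
           2 * l * moebius_factor s (- l - 1) x * D 0 (moebius_subst s x)
           + moebius_factor s (- l) x * of_real (Y' x) * D 1 (moebius_subst s x)) (at x within {0..1})"
      (is ?first)
    and "((\<lambda>x. 2 * l * moebius_factor s (- l - 1) x * D 0 (moebius_subst s x)
             + moebius_factor s (- l) x * of_real (Y' x) * D 1 (moebius_subst s x)) has_vector_derivative
           4 * l * (l + 1) * moebius_factor s (- l - 2) x * D 0 (moebius_subst s x)
           + 2 * (2 * l * moebius_factor s (- l - 1) x) * of_real (Y' x) * D 1 (moebius_subst s x)
           + moebius_factor s (- l) x * (of_real (8 * (s\<^sup>2 - 1) / (s + 1 - 2 * x) ^ 3) * D 1 (moebius_subst s x)
             + of_real (Y' x) ^ 2 * D 2 (moebius_subst s x))) (at x within {0..1})"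
      (is ?second)
proof -
  have pos: "s + 1 - 2 * x > 0"
    using x \<open>s > 1\<close> by auto
  then have "s + 1 - 2 * x \<noteq> 0"
    by simp
  note dY = has_real_derivative_moebius[OF this] has_real_derivative_moebius_derivative[OF this]
  have dP: "(moebius_factor s (- l) has_vector_derivative 2 * l * moebius_factor s (- l - 1) x) (at x within {0..1})"
    using has_vector_derivative_moebius_factor[OF pos, of "- l"] by simp
  have dP': "((\<lambda>x. 2 * l * moebius_factor s (- l - 1) x) has_vector_derivative
      4 * l * (l + 1) * moebius_factor s (- l - 2) x) (at x within {0..1})"
    using has_vector_derivative_mult_right[OF has_vector_derivative_moebius_factor[OF pos, of "- l - 1"], of "2 * l"]
    by (simp add: algebra_simps)
  have "moebius_subst s x \<in> {-1..1}" "moebius_subst s ` {0..1} \<subseteq> {-1..1}"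
    using moebius_image[OF \<open>s > 1\<close>] x by auto
  note compose = has_vector_derivative_mult_compose[where P' = "\<lambda>x. 2 * l * moebius_factor s (- l - 1) x"
      and Y' = "\<lambda>x. 2 * (s\<^sup>2 - 1) / (s + 1 - 2 * x)\<^sup>2" and F = D, OF dP dP' dY D[OF this(1)] this(2)]
  show ?first ?second
    unfolding Y'_def by (fact compose)+
qed

lemma moebius_transform_to_hypergeometric:
  fixes s :: real and l :: complex and \<phi> :: "real \<Rightarrow> complex"
  assumes "s > 1"
    and tower: "smooth_tower (-1) 1 \<phi> D"
    and eq: "\<And>y. y \<in> {-1..1} \<Longrightarrow> (l\<^sup>2 + l) * D 0 y
               + ((2 * l + 2) * of_real y + of_real (2 * (s\<^sup>2 - 1) / (s + y))) * D 1 y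
               + of_real (y\<^sup>2 - 1) * D 2 y = 0"
  obtains E where "smooth_tower 0 1 (\<lambda>x. moebius_factor s (- l) x * \<phi> (moebius_subst s x)) E"
    and "\<And>x. x \<in> {0..1} \<Longrightarrow>
           hypergeometric_op (l - of_real s) (l + of_real s) (l * (l - 1)) x (E 0 x) (E 1 x) (E 2 x) = 0"
proof -
  define \<psi> where "\<psi> x = moebius_factor s (- l) x * \<phi> (moebius_subst s x)" for x
  define Y' where "Y' x = 2 * (s\<^sup>2 - 1) / (s + 1 - 2 * x)\<^sup>2" for x
  define \<psi>' where "\<psi>' x = 2 * l * moebius_factor s (- l - 1) x * D 0 (moebius_subst s x)
      + moebius_factor s (- l) x * of_real (Y' x) * D 1 (moebius_subst s x)" for x
  define \<psi>'' where "\<psi>'' x = 4 * l * (l + 1) * moebius_factor s (- l - 2) x * D 0 (moebius_subst s x)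
      + 2 * (2 * l * moebius_factor s (- l - 1) x) * of_real (Y' x) * D 1 (moebius_subst s x)
      + moebius_factor s (- l) x * (of_real (8 * (s\<^sup>2 - 1) / (s + 1 - 2 * x) ^ 3) * D 1 (moebius_subst s x)
        + of_real (Y' x) ^ 2 * D 2 (moebius_subst s x))" for x
  have D: "\<And>n y. y \<in> {-1..1} \<Longrightarrow> (D n has_vector_derivative D (Suc n) y) (at y within {-1..1})"
    and D0: "\<And>y. y \<in> {-1..1} \<Longrightarrow> D 0 y = \<phi> y"
    using tower by (auto simp: smooth_tower_def)
  have image: "moebius_subst s x \<in> {-1..1}" if "x \<in> {0..1}" for x
    using moebius_image[OF \<open>s > 1\<close>] that by blast
  have \<psi>_eq: "\<psi> x = moebius_factor s (- l) x * D 0 (moebius_subst s x)" if "x \<in> {0..1}" for x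
    using D0[OF image[OF that]] by (simp add: \<psi>_def)
  obtain E where E: "smooth_tower 0 1 \<psi> E"
    using smooth_cc_moebius_pullback[OF \<open>s > 1\<close>, of \<phi>] tower unfolding \<psi>_def[abs_def]
    by (auto simp: smooth_cc_def)
  have "smooth_tower 0 1 \<psi>' (\<lambda>n. E (Suc n))"
  proof (rule smooth_tower_derivative[OF _ E])
    fix x :: real assume x: "x \<in> {0..1}"
    show "(\<psi> has_vector_derivative \<psi>' x) (at x within {0..1})"
      unfolding \<psi>'_def Y'_def
      by (rule has_vector_derivative_transform_within[OF moebius_pullback_has_derivatives(1)[where D = D and l = l, OF \<open>s > 1\<close> x D],
          where d=1]) (use x \<psi>_eq in auto)
  qed simp
  moreover have "smooth_tower 0 1 \<psi>'' (\<lambda>n. E (Suc (Suc n)))"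
  proof (rule smooth_tower_derivative[OF _ \<open>smooth_tower 0 1 \<psi>' (\<lambda>n. E (Suc n))\<close>])
    fix x :: real assume x: "x \<in> {0..1}"
    show "(\<psi>' has_vector_derivative \<psi>'' x) (at x within {0..1})"
      unfolding \<psi>'_def[abs_def] \<psi>''_def Y'_def by (rule moebius_pullback_has_derivatives(2)[where D = D and l = l, OF \<open>s > 1\<close> x D])
  qed simp
  ultimately have E_eq: "E 0 x = \<psi> x" "E 1 x = \<psi>' x" "E 2 x = \<psi>'' x" if "x \<in> {0..1}" for x
    using E that by (auto simp: smooth_tower_def numeral_2_eq_2)
  show thesis
  proof (rule that)
    show "smooth_tower 0 1 (\<lambda>x. moebius_factor s (- l) x * \<phi> (moebius_subst s x)) E"
      using E by (simp add: \<psi>_def[abs_def])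
  next
    fix x :: real assume x: "x \<in> {0..1}"
    show "hypergeometric_op (l - of_real s) (l + of_real s) (l * (l - 1)) x (E 0 x) (E 1 x) (E 2 x) = 0"
      unfolding E_eq[OF x] \<psi>_eq[OF x] \<psi>'_def \<psi>''_def Y'_def hypergeometric_op_moebius_pullback[OF \<open>s > 1\<close> x]
        eq[OF image[OF x]]
      by simp
  qed
qed

lemma gauss_parameters_nondegenerate:
  fixes l c d :: complex
  assumes "Re l > -1" "l \<noteq> 0" "l \<noteq> 1" and "c + d = 2 * l"
  shows "l * (l - 1) + of_nat n * (c + d + of_nat n - 1) \<noteq> 0"
proof -
  have "(l + of_nat n) * (l + of_nat n - 1) \<noteq> 0"
  proof
    assume "(l + of_nat n) * (l + of_nat n - 1) = 0"
    then have "l + of_nat n = 0 \<or> l + of_nat n - 1 = 0"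
      by simp
    then consider "l = - of_nat n" | "l = 1 - of_nat n"
      by (metis diff_eq_eq eq_iff_diff_eq_0 eq_neg_iff_add_eq_0)
    then show False
    proof cases
      case 1
      with assms(1,2) show False by (cases n) auto
    next
      case 2
      then have "Re l = 1 - real n" by simp
      with assms(1) have "n = 0 \<or> n = 1" by linarith
      with assms(2,3) 2 show False by auto
    qed
  qed
  moreover have "l * (l - 1) + of_nat n * (2 * l + of_nat n - 1) = (l + of_nat n) * (l + of_nat n - 1)"
    by algebra
  ultimately show ?thesis
    unfolding assms(4) by simp
qed

corollary gauss_equation_no_smooth_solution:
  fixes s :: real and l :: complex
  assumes "Re l > -1" "l \<noteq> 0" "l \<noteq> 1"
    and tower: "smooth_tower 0 1 \<psi> D"
    and eq: "\<forall>z\<in>{0..1}. of_real (z * (1 - z)) * D 2 z + ((l - of_real s) - 2 * l * of_real z) * D 1 z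
                 - l * (l - 1) * D 0 z = 0"
    and z: "z \<in> {0..1}"
  shows "\<psi> z = 0"
proof (rule hypergeometric_smooth_solution_eq_0[OF tower _ _ z])
  show "hypergeometric_op (l - of_real s) (l + of_real s) (l * (l - 1)) x (D 0 x) (D 1 x) (D 2 x) = 0"
    if "x \<in> {0..1}" for x
  proof -
    have "(l - of_real s) + (l + of_real s) = 2 * l"
      by simp
    then show ?thesis
      using eq that unfolding hypergeometric_op_def by auto
  qed
  show "l * (l - 1) + of_nat n * (l - of_real s + (l + of_real s) + of_nat n - 1) \<noteq> 0" for n
    by (rule gauss_parameters_nondegenerate[OF assms(1-3)]) simp
qed

corollary transformed_equation_no_smooth_solution:
  fixes s :: real and l :: complex
  assumes "s > 1" "Re l > -1" "l \<noteq> 0" "l \<noteq> 1"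
    and tower: "smooth_tower (-1) 1 \<phi> D"
    and eq: "\<forall>y\<in>{-1..1}. (l\<^sup>2 + l) * D 0 y
               + ((2 * l + 2) * of_real y + of_real (2 * (s\<^sup>2 - 1) / (s + y))) * D 1 y
               + of_real (y\<^sup>2 - 1) * D 2 y = 0"
    and y: "y \<in> {-1..1}"
  shows "\<phi> y = 0"
proof -
  obtain E where E: "smooth_tower 0 1 (\<lambda>x. moebius_factor s (- l) x * \<phi> (moebius_subst s x)) E"
    and eq_E: "\<And>x. x \<in> {0..1} \<Longrightarrow>
      hypergeometric_op (l - of_real s) (l + of_real s) (l * (l - 1)) x (E 0 x) (E 1 x) (E 2 x) = 0"
    using moebius_transform_to_hypergeometric[OF \<open>s > 1\<close> tower] eq by blast
  obtain x where x: "x \<in> {0..1}" and y_eq: "y = moebius_subst s x"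
    using moebius_image[OF \<open>s > 1\<close>] y by blast
  have "(l - of_real s) + (l + of_real s) = 2 * l"
    by simp
  note nondegenerate = gauss_parameters_nondegenerate[OF assms(2-4) this]
  have "moebius_factor s (- l) x * \<phi> y = 0"
    unfolding y_eq by (rule hypergeometric_smooth_solution_eq_0[OF E eq_E nondegenerate x])
  moreover have "of_real (s + 1 - 2 * x) \<noteq> (0 :: complex)"
    using x \<open>s > 1\<close> by (simp only: of_real_eq_0_iff) auto
  then have "moebius_factor s (- l) x \<noteq> 0"
    by (simp only: moebius_factor_def powr_def if_False exp_not_eq_zero not_False_eq_True)
  ultimately show ?thesis
    by simp
qed

theorem mainTheorem5:
  fixes a :: real and l :: complex
  assumes "a > 0" and "Re l > -1" and "l \<noteq> 0" and "l \<noteq> 1"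
  shows "(\<forall>\<psi> D. smooth_tower 0 1 \<psi> D \<and>
            (\<forall>z\<in>{0..1}. of_real (z * (1 - z)) * D 2 z
                + ((l - of_real (sqrt (1 + a))) - 2 * l * of_real z) * D 1 z
                - l * (l - 1) * D 0 z = 0)
          \<longrightarrow> (\<forall>z\<in>{0..1}. \<psi> z = 0))
       \<and> (\<forall>\<phi> D. smooth_tower (-1) 1 \<phi> D \<and>
            (\<forall>y\<in>{-1..1}. (l\<^sup>2 + l) * D 0 y
                + ((2 * l + 2) * of_real y + of_real (2 * a / (sqrt (1 + a) + y))) * D 1 y
                + of_real (y\<^sup>2 - 1) * D 2 y = 0)
          \<longrightarrow> (\<forall>y\<in>{-1..1}. \<phi> y = 0))"
proof -
  have s: "sqrt (1 + a) > 1" "(sqrt (1 + a))\<^sup>2 - 1 = a"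
    using \<open>a > 0\<close> by auto
  show ?thesis
    using gauss_equation_no_smooth_solution[OF assms(2-4)]
      transformed_equation_no_smooth_solution[OF s(1) assms(2-4), unfolded s(2)]
    by blast
qed

end
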